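(* Let $A\in\mathbb{C}^{n\times n}$, $B\in\mathbb{C}^{n\times m}$, $C\in\mathbb{C}^{p\times n}$, and suppose $A^*Z_j=C^*h_j+Z_jH_{-j}$ with $Z_j\in\mathbb{C}^{n\times N}$, $h_j\in\mathbb{C}^{p\times N}$, $H_{-j}\in\mathbb{C}^{N\times N}$ such that $0=H_{-j}+H_{-j}^*-(Z_j^*BB^*Z_j+h_j^*h_j)$; put $R_j=C^*+Z_jh_j^*$. Let $\tilde Z\in\mathbb{C}^{n\times k}$, $U_1\in\mathbb{C}^{p\times k}$, $D\in\mathbb{C}^{k\times k}$, $U_2=h_j^*U_1$ satisfy $A^*\tilde Z=C^*U_1+Z_jU_2+\tilde ZD$ (e.g. $\tilde Z=(A^*-\mu I_n)^{-1}R_j$, $U_1=I_p$, $D=\mu I_p$). Let $Y_{12}\in\mathbb{C}^{N\times k}$ solve $Y_{12}D+H_{-j}^*Y_{12}-Z_j^*BB^*\tilde Z=0$, let $Y_{22}\in\mathbb{C}^{k\times k}$ be Hermitian and solve $$0=Y_{12}^*U_2+Y_{22}D+U_2^*Y_{12}+D^*Y_{22}-\tilde Z^*BB^*\tilde Z-U_1^*U_1,$$ and assume $Y_{22}-Y_{12}^*Y_{12}$ is positive definite with Cholesky factorization $G_{22}^*G_{22}$. Define $\hat U_1=(-h_jY_{12}+U_1)G_{22}^{-1}$, $\hat U_2=(-H_{-j}Y_{12}+U_2+Y_{12}D)G_{22}^{-1}$, $\hat D=G_{22}DG_{22}^{-1}$, $\hat Z=(-Z_jY_{12}+\tilde Z)G_{22}^{-1}$,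 $Z_{j+1}=\begin{bmatrix}Z_j&\hat Z\end{bmatrix}$, $h_{j+1}=\begin{bmatrix}h_j&\hat U_1\end{bmatrix}$, $H_{-(j+1)}=\begin{bmatrix}H_{-j}&\hat U_2\\0&\hat D\end{bmatrix}$. Then $A^*Z_{j+1}=C^*h_{j+1}+Z_{j+1}H_{-(j+1)}$, $0=H_{-(j+1)}+H_{-(j+1)}^*-(Z_{j+1}^*BB^*Z_{j+1}+h_{j+1}^*h_{j+1})$, and $R_{j+1}:=C^*+Z_{j+1}h_{j+1}^*=R_j+\hat Z\hat U_1^*$ satisfies $\mathcal{R}(Z_{j+1}Z_{j+1}^* )=R_{j+1}R_{j+1}^*$.
   Context: $\mathcal{R}(X)=A^*X+XA+C^*C-XBB^*X$ is the Riccati residual. The hypothesis on $(Z_j,h_j,H_{-j})$ states that the identity matrix solves the small Lyapunov equation $0=\tilde YH_{-j}+H_{-j}^*\tilde Y-(Z_j^*BB^*Z_j+h_j^*h_j)$. *)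

theory Defs
  imports "Jordan_Normal_Form.Schur_Decomposition"
begin

definition hcat :: "'a::zero mat \<Rightarrow> 'a mat \<Rightarrow> 'a mat" where
  "hcat X Y = four_block_mat X Y (0\<^sub>m 0 (dim_col X)) (0\<^sub>m 0 (dim_col Y))"

definition pos_def_mat :: "complex mat \<Rightarrow> bool" where
  "pos_def_mat M \<longleftrightarrow> square_mat M \<and> mat_adjoint M = M \<and>
     (\<forall>v \<in> carrier_vec (dim_row M). v \<noteq> 0\<^sub>v (dim_row M) \<longrightarrow>
        Re (conjugate v \<bullet> (M *\<^sub>v v)) > 0)"

definition cholesky_factor :: "complex mat \<Rightarrow> complex mat \<Rightarrow> bool" where
  "cholesky_factor G M \<longleftrightarrow> G \<in> carrier_mat (dim_row M) (dim_row M) \<and> upper_triangular G \<and>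
     (\<forall>i < dim_row G. Im (G $$ (i,i)) = 0 \<and> Re (G $$ (i,i)) > 0) \<and>
     mat_adjoint G * G = M"

definition riccati_res :: "complex mat \<Rightarrow> complex mat \<Rightarrow> complex mat \<Rightarrow> complex mat \<Rightarrow> complex mat" where
  "riccati_res A B C X =
     mat_adjoint A * X + X * A + mat_adjoint C * C - X * B * mat_adjoint B * X"

end

theory Submission
  imports Defs
begin

text \<open>Put Z = [Z_j Zt], h = [h_j U_1] and K = [H_j U_2; 0 D]. The hypotheses say exactly that
  A^* Z = C^* h + Z K and that Y = [I Y_12; Y_12^* Y_22] solves the projected Lyapunov equation
  Y K + K^* Y = Z^* B B^* Z + h^* h. The Cholesky factor gives Y = L^* L with L = [I Y_12; 0 G_22],
  and the update is the change of basis by M = L^-1: Z_(j+1) = Z M, h_(j+1) = h M and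
  H_(j+1) = L K M. The Sylvester equation is invariant under this similarity, and the congruence
  by M turns Y into the identity, which is the Lyapunov equation of the new triple. Any triple
  satisfying both equations has Riccati residual (C^* + Z h^*) (C^* + Z h^*)^*, as one sees by
  expanding A^* Z Z^* and Z Z^* A.\<close>

lemma dim_mat_adjoint [simp]:
  "dim_row (mat_adjoint A) = dim_col A" "dim_col (mat_adjoint A) = dim_row A"
  unfolding mat_adjoint_def by auto

lemma carrier_mat_adjoint_iff [simp]: "mat_adjoint A \<in> carrier_mat nc nr \<longleftrightarrow> A \<in> carrier_mat nr nc"
  unfolding carrier_mat_def by auto

lemmas adjoint_carrier_mat = carrier_mat_adjoint_iff[THEN iffD2]

lemma index_mat_adjoint:
  "i < dim_col A \<Longrightarrow> j < dim_row A \<Longrightarrow> mat_adjoint A $$ (i, j) = conjugate (A $$ (j, i))"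
  unfolding mat_adjoint_def by (auto simp: mat_of_rows_def)

lemma adjoint_adjoint_mat [simp]: "mat_adjoint (mat_adjoint A) = A"
  by (rule eq_matI) (auto simp: index_mat_adjoint)

lemma adjoint_add_mat:
  "dim_row A = dim_row B \<Longrightarrow> dim_col A = dim_col B \<Longrightarrow>
   mat_adjoint (A + B) = mat_adjoint A + mat_adjoint B"
  by (rule eq_matI) (auto simp: index_mat_adjoint conjugate_dist_add)

lemma adjoint_uminus_mat [simp]: "mat_adjoint (- A) = - mat_adjoint A"
  by (rule eq_matI) (auto simp: index_mat_adjoint conjugate_neg)

lemma adjoint_zero_mat [simp]: "mat_adjoint (0\<^sub>m nr nc) = 0\<^sub>m nc nr"
  by (rule eq_matI) (auto simp: index_mat_adjoint)

lemma conjugate_one [simp]: "conjugate (1 :: 'a::conjugatable_field) = 1"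
  by (metis conjugate_dist_mul conjugate_id mult.left_neutral mult.right_neutral)

lemma adjoint_one_mat [simp]: "mat_adjoint (1\<^sub>m n :: 'a::conjugatable_field mat) = 1\<^sub>m n"
  by (rule eq_matI) (auto simp: index_mat_adjoint)

lemma adjoint_mult_mat:
  fixes A B :: "'a::conjugatable_field mat"
  assumes "dim_col A = dim_row B"
  shows "mat_adjoint (A * B) = mat_adjoint B * mat_adjoint A"
proof (rule eq_matI)
  fix i j assume "i < dim_row (mat_adjoint B * mat_adjoint A)" "j < dim_col (mat_adjoint B * mat_adjoint A)"
  with assms show "mat_adjoint (A * B) $$ (i, j) = (mat_adjoint B * mat_adjoint A) $$ (i, j)"
    by (auto simp: index_mat_adjoint scalar_prod_def sum_conjugate conjugate_dist_mul mult.commute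
        intro!: sum.cong)
qed auto

lemma adjoint_four_block_mat:
  "dim_row P = dim_row Q \<Longrightarrow> dim_row R = dim_row S \<Longrightarrow> dim_col P = dim_col R \<Longrightarrow> dim_col Q = dim_col S \<Longrightarrow>
   mat_adjoint (four_block_mat P Q R S)
   = four_block_mat (mat_adjoint P) (mat_adjoint R) (mat_adjoint Q) (mat_adjoint S)"
  by (rule eq_matI) (auto simp: index_mat_adjoint)

section \<open>Normal forms of matrix expressions\<close>

text \<open>The library states the ring laws for matrices with carrier premises, which the simplifier
  cannot instantiate; the primed variants below have dimension premises instead. Rewriting with
  \<open>mat_ring_normalize\<close> brings an expression into a sum of left-associated products, and two such
  normal forms are then compared entrywise, where the entries of the products are atoms.\<close>

lemma assoc_mult_mat':
  "dim_col A = dim_row B \<Longrightarrow> dim_col B = dim_row C \<Longrightarrow> A * (B * C) = A * B * (C :: 'a::semiring_0 mat)"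
  by (rule assoc_mult_mat[symmetric]) auto

lemma mult_add_distrib_mat':
  "dim_col A = dim_row B \<Longrightarrow> dim_row B = dim_row C \<Longrightarrow> dim_col B = dim_col C \<Longrightarrow>
   A * (B + C) = A * B + A * (C :: 'a::semiring_0 mat)"
  by (rule mult_add_distrib_mat) auto

lemma add_mult_distrib_mat':
  "dim_row A = dim_row B \<Longrightarrow> dim_col A = dim_col B \<Longrightarrow> dim_col B = dim_row C \<Longrightarrow>
   (A + B) * C = A * C + B * (C :: 'a::semiring_0 mat)"
  by (rule add_mult_distrib_mat) auto

lemma minus_add_uminus_mat':
  "dim_row A = dim_row B \<Longrightarrow> dim_col A = dim_col B \<Longrightarrow> A - B = A + - (B :: 'a::group_add mat)"
  by (rule eq_matI) auto

lemma uminus_add_mat':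
  "dim_row A = dim_row B \<Longrightarrow> dim_col A = dim_col B \<Longrightarrow> - (A + B) = - A + - (B :: 'a::ab_group_add mat)"
  by (rule eq_matI) auto

lemmas mat_ring_normalize = assoc_mult_mat' mult_add_distrib_mat' add_mult_distrib_mat'
  minus_add_uminus_mat' uminus_add_mat' adjoint_add_mat adjoint_mult_mat

lemma assoc_add_mat':
  "dim_row A = dim_row B \<Longrightarrow> dim_col A = dim_col B \<Longrightarrow> dim_row B = dim_row C \<Longrightarrow> dim_col B = dim_col C \<Longrightarrow>
   A + B + C = A + (B + (C :: 'a::monoid_add mat))"
  by (rule eq_matI) (auto simp: add.assoc)

lemma left_add_zero_mat' [simp]:
  "dim_row A = nr \<Longrightarrow> dim_col A = nc \<Longrightarrow> 0\<^sub>m nr nc + A = (A :: 'a::monoid_add mat)"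
  by (rule eq_matI) auto

lemma right_add_zero_mat' [simp]:
  "dim_row A = nr \<Longrightarrow> dim_col A = nc \<Longrightarrow> A + 0\<^sub>m nr nc = (A :: 'a::monoid_add mat)"
  by (rule eq_matI) auto

lemma uminus_zero_mat [simp]: "- 0\<^sub>m nr nc = (0\<^sub>m nr nc :: 'a::group_add mat)"
  by (rule eq_matI) auto

lemma add_uminus_self_mat [simp]: "A + - A = 0\<^sub>m (dim_row A) (dim_col (A :: 'a::group_add mat))"
  by (rule eq_matI) auto

text \<open>In a left-associated product \<open>X * P * Q\<close> the subterm \<open>P * Q\<close> does not occur, so an equation
  \<open>P * Q = R\<close> has to be turned into this form before it can be used for rewriting.\<close>

lemma mult_assoc_subst_mat:
  "P * Q = R \<Longrightarrow> dim_col X = dim_row P \<Longrightarrow> dim_col P = dim_row Q \<Longrightarrow> X * P * Q = X * (R :: 'a::semiring_0 mat)"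
  by (metis assoc_mult_mat')

lemma zero_eq_add_minus_mat:
  fixes X Y S :: "'a::ab_group_add mat"
  assumes "X \<in> carrier_mat r c" "Y \<in> carrier_mat r c" "S \<in> carrier_mat r c"
    and "0\<^sub>m r c = X + Y - S"
  shows "Y = S - X"
proof (rule eq_matI)
  fix i j assume ij: "i < dim_row (S - X)" "j < dim_col (S - X)"
  then have "0\<^sub>m r c $$ (i, j) = (X + Y - S) $$ (i, j)"
    using assms(4) by simp
  with ij assms(1-3) show "Y $$ (i, j) = (S - X) $$ (i, j)"
    by (simp add: algebra_simps)
qed (use assms in auto)

lemma dim_hcat [simp]: "dim_row (hcat X Y) = dim_row X" "dim_col (hcat X Y) = dim_col X + dim_col Y"
  unfolding hcat_def by auto

lemma hcat_carrier_mat [simp]: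
  "X \<in> carrier_mat n a \<Longrightarrow> Y \<in> carrier_mat n b \<Longrightarrow> hcat X Y \<in> carrier_mat n (a + b)"
  unfolding hcat_def by auto

lemma index_hcat:
  "i < dim_row X \<Longrightarrow> j < dim_col X + dim_col Y \<Longrightarrow>
   hcat X Y $$ (i, j) = (if j < dim_col X then X $$ (i, j) else Y $$ (i, j - dim_col X))"
  unfolding hcat_def by auto

lemma mult_hcat:
  "dim_col F = dim_row X \<Longrightarrow> dim_row X = dim_row Y \<Longrightarrow>
   F * hcat X Y = hcat (F * X) (F * (Y :: 'a::semiring_0 mat))"
  by (rule eq_matI) (auto simp: index_hcat scalar_prod_def)

lemma add_hcat:
  "dim_row X = dim_row X' \<Longrightarrow> dim_col X = dim_col X' \<Longrightarrow> dim_row Y = dim_row Y' \<Longrightarrow>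
   dim_col Y = dim_col Y' \<Longrightarrow> dim_row X = dim_row Y \<Longrightarrow>
   hcat X Y + hcat X' Y' = hcat (X + X') (Y + (Y' :: 'a::monoid_add mat))"
  by (rule eq_matI) (auto simp: index_hcat)

lemma hcat_mult_four_block_mat:
  fixes X Y P Q R S :: "'a::semiring_0 mat"
  assumes "X \<in> carrier_mat n a" "Y \<in> carrier_mat n b" "P \<in> carrier_mat a c" "Q \<in> carrier_mat a d"
    "R \<in> carrier_mat b c" "S \<in> carrier_mat b d"
  shows "hcat X Y * four_block_mat P Q R S = hcat (X * P + Y * R) (X * Q + Y * S)"
proof -
  have "hcat X Y = four_block_mat X Y (0\<^sub>m 0 a) (0\<^sub>m 0 b)"
    using assms by (simp add: hcat_def)
  then show ?thesis
    using assms
    by (simp add: mult_four_block_mat[OF assms(1,2) zero_carrier_mat zero_carrier_mat assms(3-6)] hcat_def)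
qed

lemma adjoint_hcat_mult_hcat:
  fixes X Y X' Y' :: "'a::conjugatable_field mat"
  assumes "dim_row X = dim_row Y" "dim_row X' = dim_row Y'" "dim_row X = dim_row X'"
  shows "mat_adjoint (hcat X Y) * hcat X' Y'
    = four_block_mat (mat_adjoint X * X') (mat_adjoint X * Y') (mat_adjoint Y * X') (mat_adjoint Y * Y')"
  using assms by (intro eq_matI) (auto simp: index_hcat index_mat_adjoint scalar_prod_def)

lemma hcat_mult_adjoint_hcat:
  fixes X Y X' Y' :: "'a::conjugatable_field mat"
  assumes X: "X \<in> carrier_mat n a" and Y: "Y \<in> carrier_mat n b"
    and X': "X' \<in> carrier_mat n' a" and Y': "Y' \<in> carrier_mat n' b"
  shows "hcat X Y * mat_adjoint (hcat X' Y') = X * mat_adjoint X' + Y * mat_adjoint Y'"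
proof -
  have "hcat X Y = four_block_mat X Y (0\<^sub>m 0 a) (0\<^sub>m 0 b)"
    using X Y by (simp add: hcat_def)
  moreover have "mat_adjoint (hcat X' Y') = four_block_mat (mat_adjoint X') (0\<^sub>m a 0) (mat_adjoint Y') (0\<^sub>m b 0)"
    using X' Y' by (simp add: hcat_def adjoint_four_block_mat)
  ultimately show ?thesis
    using assms
    by (simp add: mult_four_block_mat[OF X Y zero_carrier_mat zero_carrier_mat
          adjoint_carrier_mat[OF X'] zero_carrier_mat adjoint_carrier_mat[OF Y'] zero_carrier_mat])
      (rule eq_matI; simp)
qed

lemma add_four_block_mat':
  "dim_row P = dim_row Q \<Longrightarrow> dim_row R = dim_row S \<Longrightarrow> dim_col P = dim_col R \<Longrightarrow> dim_col Q = dim_col S \<Longrightarrow>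
   dim_row P' = dim_row P \<Longrightarrow> dim_col P' = dim_col P \<Longrightarrow> dim_row Q' = dim_row Q \<Longrightarrow> dim_col Q' = dim_col Q \<Longrightarrow>
   dim_row R' = dim_row R \<Longrightarrow> dim_col R' = dim_col R \<Longrightarrow> dim_row S' = dim_row S \<Longrightarrow> dim_col S' = dim_col S \<Longrightarrow>
   four_block_mat P Q R S + four_block_mat P' Q' R' S'
   = four_block_mat (P + P') (Q + Q') (R + R') (S + (S' :: 'a::{plus, zero} mat))"
  by (rule eq_matI) auto

lemma minus_four_block_mat':
  "dim_row P = dim_row Q \<Longrightarrow> dim_row R = dim_row S \<Longrightarrow> dim_col P = dim_col R \<Longrightarrow> dim_col Q = dim_col S \<Longrightarrow>
   dim_row P' = dim_row P \<Longrightarrow> dim_col P' = dim_col P \<Longrightarrow> dim_row Q' = dim_row Q \<Longrightarrow> dim_col Q' = dim_col Q \<Longrightarrow>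
   dim_row R' = dim_row R \<Longrightarrow> dim_col R' = dim_col R \<Longrightarrow> dim_row S' = dim_row S \<Longrightarrow> dim_col S' = dim_col S \<Longrightarrow>
   four_block_mat P Q R S - four_block_mat P' Q' R' S'
   = four_block_mat (P - P') (Q - Q') (R - R') (S - (S' :: 'a::{minus, zero} mat))"
  by (rule eq_matI) auto

section \<open>The block upper triangular change of basis\<close>

lemma four_block_upper_inverse:
  fixes Y G G' :: "'a::ring_1 mat"
  assumes Y: "Y \<in> carrier_mat N k" and G: "G \<in> carrier_mat k k" and G': "G' \<in> carrier_mat k k"
    and inv: "G * G' = 1\<^sub>m k" "G' * G = 1\<^sub>m k"
  defines "L \<equiv> four_block_mat (1\<^sub>m N) Y (0\<^sub>m k N) G"
    and "M \<equiv> four_block_mat (1\<^sub>m N) (- (Y * G')) (0\<^sub>m k N) G'"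
  shows "L * M = 1\<^sub>m (N + k)" "M * L = 1\<^sub>m (N + k)"
proof -
  have [simp]: "dim_row Y = N" "dim_col Y = k" "dim_row G = k" "dim_col G = k" "dim_row G' = k" "dim_col G' = k"
    using assms by auto
  have YG: "Y * G' \<in> carrier_mat N k" using assms by auto
  then have YG': "- (Y * G') \<in> carrier_mat N k" by simp
  show "L * M = 1\<^sub>m (N + k)"
    unfolding L_def M_def
    by (simp add: mult_four_block_mat[OF one_carrier_mat Y zero_carrier_mat G one_carrier_mat YG' zero_carrier_mat G']
        inv uminus_l_inv_mat[OF YG])
  show "M * L = 1\<^sub>m (N + k)"
    unfolding L_def M_def
    by (simp del: assoc_mult_mat add: mult_four_block_mat[OF one_carrier_mat YG' zero_carrier_mat G' one_carrier_mat Y zero_carrier_mat G]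
        inv mat_ring_normalize mult_assoc_subst_mat[OF inv(2)])
qed

lemma hcat_mult_upper_block:
  fixes X1 X2 Y G' :: "'a::ring_1 mat"
  assumes X1: "X1 \<in> carrier_mat n N" and X2: "X2 \<in> carrier_mat n k"
    and Y: "Y \<in> carrier_mat N k" and G': "G' \<in> carrier_mat k k"
  shows "hcat X1 X2 * four_block_mat (1\<^sub>m N) (- (Y * G')) (0\<^sub>m k N) G' = hcat X1 ((- (X1 * Y) + X2) * G')"
proof -
  have [simp]: "dim_row X1 = n" "dim_col X1 = N" "dim_row X2 = n" "dim_col X2 = k"
    "dim_row Y = N" "dim_col Y = k" "dim_row G' = k" "dim_col G' = k"
    using assms by auto
  have YG': "- (Y * G') \<in> carrier_mat N k" using assms by auto
  show ?thesis
    by (simp del: assoc_mult_mat add: hcat_mult_four_block_mat[OF X1 X2 one_carrier_mat YG' zero_carrier_mat G']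
        mat_ring_normalize)
qed

lemma four_block_upper_similarity:
  fixes Y G G' H U D :: "'a::ring_1 mat"
  assumes Y: "Y \<in> carrier_mat N k" and G: "G \<in> carrier_mat k k" and G': "G' \<in> carrier_mat k k"
    and H: "H \<in> carrier_mat N N" and U: "U \<in> carrier_mat N k" and D: "D \<in> carrier_mat k k"
  shows "four_block_mat (1\<^sub>m N) Y (0\<^sub>m k N) G * four_block_mat H U (0\<^sub>m k N) D
      * four_block_mat (1\<^sub>m N) (- (Y * G')) (0\<^sub>m k N) G'
    = four_block_mat H ((- (H * Y) + U + Y * D) * G') (0\<^sub>m k N) (G * D * G')"
proof -
  have [simp]: "dim_row Y = N" "dim_col Y = k" "dim_row G = k" "dim_col G = k" "dim_row G' = k" "dim_col G' = k"
    "dim_row H = N" "dim_col H = N" "dim_row U = N" "dim_col U = k" "dim_row D = k" "dim_col D = k"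
    using assms by auto
  have YG': "- (Y * G') \<in> carrier_mat N k" and UYD: "U + Y * D \<in> carrier_mat N k"
    and GD: "G * D \<in> carrier_mat k k"
    using assms by auto
  have "four_block_mat (1\<^sub>m N) Y (0\<^sub>m k N) G * four_block_mat H U (0\<^sub>m k N) D
    = four_block_mat H (U + Y * D) (0\<^sub>m k N) (G * D)"
    using assms by (simp add: mult_four_block_mat[OF one_carrier_mat Y zero_carrier_mat G H U zero_carrier_mat D])
  also have "\<dots> * four_block_mat (1\<^sub>m N) (- (Y * G')) (0\<^sub>m k N) G'
    = four_block_mat H ((- (H * Y) + U + Y * D) * G') (0\<^sub>m k N) (G * D * G')"
    using assms
    by (subst mult_four_block_mat[OF H UYD zero_carrier_mat GD one_carrier_mat YG' zero_carrier_mat G'])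
      (simp_all del: assoc_mult_mat add: mat_ring_normalize assoc_add_mat')
  finally show ?thesis .
qed

lemma four_block_cholesky:
  fixes Y S G :: "'a::conjugatable_field mat"
  assumes Y: "Y \<in> carrier_mat N k" and G: "G \<in> carrier_mat k k" and S: "S \<in> carrier_mat k k"
    and chol: "mat_adjoint G * G = S - mat_adjoint Y * Y"
  shows "mat_adjoint (four_block_mat (1\<^sub>m N) Y (0\<^sub>m k N) G) * four_block_mat (1\<^sub>m N) Y (0\<^sub>m k N) G
    = four_block_mat (1\<^sub>m N) Y (mat_adjoint Y) S"
proof -
  have [simp]: "dim_row Y = N" "dim_col Y = k" "dim_row G = k" "dim_col G = k" "dim_row S = k" "dim_col S = k"
    using assms by auto
  have S_eq: "mat_adjoint Y * Y + mat_adjoint G * G = S"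
    unfolding chol by (rule eq_matI) (simp_all del: index_mult_mat(1))
  have "mat_adjoint (four_block_mat (1\<^sub>m N) Y (0\<^sub>m k N) G)
    = four_block_mat (1\<^sub>m N) (0\<^sub>m N k) (mat_adjoint Y) (mat_adjoint G)"
    by (simp add: adjoint_four_block_mat)
  also have "\<dots> * four_block_mat (1\<^sub>m N) Y (0\<^sub>m k N) G
    = four_block_mat (1\<^sub>m N * 1\<^sub>m N + 0\<^sub>m N k * 0\<^sub>m k N) (1\<^sub>m N * Y + 0\<^sub>m N k * G)
        (mat_adjoint Y * 1\<^sub>m N + mat_adjoint G * 0\<^sub>m k N) (mat_adjoint Y * Y + mat_adjoint G * G)"
    by (rule mult_four_block_mat[OF one_carrier_mat zero_carrier_mat adjoint_carrier_mat[OF Y]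
          adjoint_carrier_mat[OF G] one_carrier_mat Y zero_carrier_mat G])
  also have "\<dots> = four_block_mat (1\<^sub>m N) Y (mat_adjoint Y) S"
    unfolding S_eq by simp
  finally show ?thesis .
qed

section \<open>The projected equations\<close>

lemma sylvester_eq_hcat:
  fixes F E Z1 Z2 h1 h2 H U D :: "'a::semiring_0 mat"
  assumes F: "F \<in> carrier_mat n n" and E: "E \<in> carrier_mat n p"
    and Z1: "Z1 \<in> carrier_mat n N" and h1: "h1 \<in> carrier_mat p N" and H: "H \<in> carrier_mat N N"
    and Z2: "Z2 \<in> carrier_mat n k" and h2: "h2 \<in> carrier_mat p k"
    and U: "U \<in> carrier_mat N k" and D: "D \<in> carrier_mat k k"
    and eq1: "F * Z1 = E * h1 + Z1 * H" and eq2: "F * Z2 = E * h2 + Z1 * U + Z2 * D"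
  shows "F * hcat Z1 Z2 = E * hcat h1 h2 + hcat Z1 Z2 * four_block_mat H U (0\<^sub>m k N) D"
proof -
  have [simp]: "dim_row F = n" "dim_col F = n" "dim_row E = n" "dim_col E = p"
    "dim_row Z1 = n" "dim_col Z1 = N" "dim_row h1 = p" "dim_col h1 = N" "dim_row H = N" "dim_col H = N"
    "dim_row Z2 = n" "dim_col Z2 = k" "dim_row h2 = p" "dim_col h2 = k" "dim_row U = N" "dim_col U = k"
    "dim_row D = k" "dim_col D = k"
    using assms by auto
  show ?thesis
    by (simp add: eq1 eq2 mult_hcat hcat_mult_four_block_mat[OF Z1 Z2 H U zero_carrier_mat D] add_hcat assoc_add_mat')
qed

lemma lyapunov_res_four_block:
  fixes B Z1 Z2 h1 h2 H U D Y S :: "'a::conjugatable_field mat"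
  assumes B: "B \<in> carrier_mat n m" and Z1: "Z1 \<in> carrier_mat n N" and Z2: "Z2 \<in> carrier_mat n k"
    and h1: "h1 \<in> carrier_mat p N" and h2: "h2 \<in> carrier_mat p k"
    and H: "H \<in> carrier_mat N N" and D: "D \<in> carrier_mat k k"
    and Y: "Y \<in> carrier_mat N k" and S: "S \<in> carrier_mat k k"
    and U: "U = mat_adjoint h1 * h2"
  defines "P \<equiv> four_block_mat (1\<^sub>m N) Y (mat_adjoint Y) S" and "K \<equiv> four_block_mat H U (0\<^sub>m k N) D"
    and "Z \<equiv> hcat Z1 Z2" and "h \<equiv> hcat h1 h2"
  shows "P * K + mat_adjoint K * P - (mat_adjoint Z * B * mat_adjoint B * Z + mat_adjoint h * h)
    = four_block_mat
        (H + mat_adjoint H - (mat_adjoint Z1 * B * mat_adjoint B * Z1 + mat_adjoint h1 * h1))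
        (Y * D + mat_adjoint H * Y - mat_adjoint Z1 * B * mat_adjoint B * Z2)
        (mat_adjoint (Y * D + mat_adjoint H * Y - mat_adjoint Z1 * B * mat_adjoint B * Z2))
        (mat_adjoint Y * U + S * D + mat_adjoint U * Y + mat_adjoint D * S
          - mat_adjoint Z2 * B * mat_adjoint B * Z2 - mat_adjoint h2 * h2)"
proof -
  have [simp]: "dim_row B = n" "dim_col B = m" "dim_row Z1 = n" "dim_col Z1 = N" "dim_row Z2 = n" "dim_col Z2 = k"
    "dim_row h1 = p" "dim_col h1 = N" "dim_row h2 = p" "dim_col h2 = k" "dim_row H = N" "dim_col H = N"
    "dim_row D = k" "dim_col D = k" "dim_row Y = N" "dim_col Y = k" "dim_row S = k" "dim_col S = k"
    "dim_row U = N" "dim_col U = k"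
    using assms by auto
  have U': "U \<in> carrier_mat N k" by (simp add: carrier_matI)
  have PK: "P * K = four_block_mat H (U + Y * D) (mat_adjoint Y * H) (mat_adjoint Y * U + S * D)"
    unfolding P_def K_def
    by (simp add: mult_four_block_mat[OF one_carrier_mat Y adjoint_carrier_mat[OF Y] S H U' zero_carrier_mat D])
  have KP: "mat_adjoint K * P = four_block_mat (mat_adjoint H) (mat_adjoint H * Y)
      (mat_adjoint U + mat_adjoint D * mat_adjoint Y) (mat_adjoint U * Y + mat_adjoint D * S)"
    unfolding P_def K_def
    by (simp add: adjoint_four_block_mat mult_four_block_mat[OF adjoint_carrier_mat[OF H] zero_carrier_mat
          adjoint_carrier_mat[OF U'] adjoint_carrier_mat[OF D] one_carrier_mat Y adjoint_carrier_mat[OF Y] S])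
  have "mat_adjoint Z * B * mat_adjoint B * Z = mat_adjoint (mat_adjoint B * Z) * (mat_adjoint B * Z)"
    unfolding Z_def by (simp del: assoc_mult_mat add: mat_ring_normalize)
  also have "mat_adjoint B * Z = hcat (mat_adjoint B * Z1) (mat_adjoint B * Z2)"
    unfolding Z_def by (simp add: mult_hcat)
  finally have ZZ: "mat_adjoint Z * B * mat_adjoint B * Z = four_block_mat
      (mat_adjoint (mat_adjoint B * Z1) * (mat_adjoint B * Z1)) (mat_adjoint (mat_adjoint B * Z1) * (mat_adjoint B * Z2))
      (mat_adjoint (mat_adjoint B * Z2) * (mat_adjoint B * Z1)) (mat_adjoint (mat_adjoint B * Z2) * (mat_adjoint B * Z2))"
    by (simp add: adjoint_hcat_mult_hcat)
  have hh: "mat_adjoint h * h = four_block_mat (mat_adjoint h1 * h1) (mat_adjoint h1 * h2)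
      (mat_adjoint h2 * h1) (mat_adjoint h2 * h2)"
    unfolding h_def by (simp add: adjoint_hcat_mult_hcat)
  show ?thesis
    unfolding PK KP ZZ hh
    by (simp add: add_four_block_mat' minus_four_block_mat')
      (intro cong_four_block_mat; simp del: assoc_mult_mat add: mat_ring_normalize U;
        rule eq_matI; simp_all del: index_mult_mat(1) add: algebra_simps)
qed

lemma sylvester_change_of_basis:
  fixes F E Z h K L M :: "'a::ring_1 mat"
  assumes F: "F \<in> carrier_mat n n" and E: "E \<in> carrier_mat n p"
    and Z: "Z \<in> carrier_mat n r" and h: "h \<in> carrier_mat p r" and K: "K \<in> carrier_mat r r"
    and L: "L \<in> carrier_mat r r" and M: "M \<in> carrier_mat r r"
    and eq: "F * Z = E * h + Z * K" and inv: "M * L = 1\<^sub>m r"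
  shows "F * (Z * M) = E * (h * M) + Z * M * (L * K * M)"
proof -
  have [simp]: "dim_row F = n" "dim_col F = n" "dim_row E = n" "dim_col E = p"
    "dim_row Z = n" "dim_col Z = r" "dim_row h = p" "dim_col h = r" "dim_row K = r" "dim_col K = r"
    "dim_row L = r" "dim_col L = r" "dim_row M = r" "dim_col M = r"
    using assms by auto
  show ?thesis
    by (simp del: assoc_mult_mat add: mat_ring_normalize eq inv mult_assoc_subst_mat[OF inv])
qed

lemma lyapunov_congruence:
  fixes B Z h K L M :: "'a::conjugatable_field mat"
  assumes B: "B \<in> carrier_mat n m" and Z: "Z \<in> carrier_mat n r" and h: "h \<in> carrier_mat p r"
    and K: "K \<in> carrier_mat r r" and L: "L \<in> carrier_mat r r" and M: "M \<in> carrier_mat r r"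
    and lyap: "0\<^sub>m r r = mat_adjoint L * L * K + mat_adjoint K * (mat_adjoint L * L)
      - (mat_adjoint Z * B * mat_adjoint B * Z + mat_adjoint h * h)"
    and inv: "L * M = 1\<^sub>m r"
  shows "0\<^sub>m r r = L * K * M + mat_adjoint (L * K * M)
    - (mat_adjoint (Z * M) * B * mat_adjoint B * (Z * M) + mat_adjoint (h * M) * (h * M))"
proof -
  have [simp]: "dim_row B = n" "dim_col B = m"
    "dim_row Z = n" "dim_col Z = r" "dim_row h = p" "dim_col h = r" "dim_row K = r" "dim_col K = r"
    "dim_row L = r" "dim_col L = r" "dim_row M = r" "dim_col M = r"
    using assms by auto
  have inv': "mat_adjoint M * mat_adjoint L = 1\<^sub>m r"
    using arg_cong[OF inv, of mat_adjoint] by (simp add: adjoint_mult_mat)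
  have "L * K * M + mat_adjoint (L * K * M)
      - (mat_adjoint (Z * M) * B * mat_adjoint B * (Z * M) + mat_adjoint (h * M) * (h * M))
    = mat_adjoint M * (mat_adjoint L * L * K + mat_adjoint K * (mat_adjoint L * L)
      - (mat_adjoint Z * B * mat_adjoint B * Z + mat_adjoint h * h)) * M"
    by (simp del: assoc_mult_mat add: mat_ring_normalize inv inv' mult_assoc_subst_mat[OF inv]
        mult_assoc_subst_mat[OF inv'])
  also have "\<dots> = 0\<^sub>m r r"
    unfolding lyap[symmetric] by simp
  finally show ?thesis ..
qed

lemma riccati_res_low_rank:
  fixes A B C Z h H :: "complex mat"
  assumes A: "A \<in> carrier_mat n n" and B: "B \<in> carrier_mat n m" and C: "C \<in> carrier_mat p n"
    and Z: "Z \<in> carrier_mat n r" and h: "h \<in> carrier_mat p r" and H: "H \<in> carrier_mat r r"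
    and eqZ: "mat_adjoint A * Z = mat_adjoint C * h + Z * H"
    and eqH: "0\<^sub>m r r = H + mat_adjoint H - (mat_adjoint Z * B * mat_adjoint B * Z + mat_adjoint h * h)"
  shows "riccati_res A B C (Z * mat_adjoint Z)
    = (mat_adjoint C + Z * mat_adjoint h) * mat_adjoint (mat_adjoint C + Z * mat_adjoint h)"
proof -
  have [simp]: "dim_row A = n" "dim_col A = n" "dim_row B = n" "dim_col B = m" "dim_row C = p" "dim_col C = n"
    "dim_row Z = n" "dim_col Z = r" "dim_row h = p" "dim_col h = r" "dim_row H = r" "dim_col H = r"
    using assms by auto
  have adjH: "mat_adjoint H = mat_adjoint Z * B * mat_adjoint B * Z + mat_adjoint h * h - H"
    using zero_eq_add_minus_mat[OF H _ _ eqH] by (simp add: carrier_matI)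
  have adjZ: "mat_adjoint Z * A = mat_adjoint h * C + mat_adjoint H * mat_adjoint Z"
    using arg_cong[OF eqZ, of mat_adjoint] by (simp add: mat_ring_normalize)
  show ?thesis
    unfolding riccati_res_def
    by (simp del: assoc_mult_mat add: mat_ring_normalize eqZ adjZ adjH mult_assoc_subst_mat[OF adjZ])
      (rule eq_matI; simp_all del: index_mult_mat(1) add: algebra_simps)
qed

lemma cholesky_block_lyapunov_eq:
  fixes B Zj Zt hj U1 U2 Hj D Y12 Y22 G22 :: "'a::conjugatable_field mat"
  assumes B: "B \<in> carrier_mat n m" and Zj: "Zj \<in> carrier_mat n N" and Zt: "Zt \<in> carrier_mat n k"
    and hj: "hj \<in> carrier_mat p N" and U1: "U1 \<in> carrier_mat p k"
    and Hj: "Hj \<in> carrier_mat N N" and D: "D \<in> carrier_mat k k"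
    and Y12: "Y12 \<in> carrier_mat N k" and Y22: "Y22 \<in> carrier_mat k k" and G22: "G22 \<in> carrier_mat k k"
    and U2: "U2 = mat_adjoint hj * U1"
    and eqH: "0\<^sub>m N N = Hj + mat_adjoint Hj - (mat_adjoint Zj * B * mat_adjoint B * Zj + mat_adjoint hj * hj)"
    and eqY12: "Y12 * D + mat_adjoint Hj * Y12 - mat_adjoint Zj * B * mat_adjoint B * Zt = 0\<^sub>m N k"
    and eqY22: "0\<^sub>m k k = mat_adjoint Y12 * U2 + Y22 * D + mat_adjoint U2 * Y12 + mat_adjoint D * Y22
      - mat_adjoint Zt * B * mat_adjoint B * Zt - mat_adjoint U1 * U1"
    and chol: "mat_adjoint G22 * G22 = Y22 - mat_adjoint Y12 * Y12"
  defines "L \<equiv> four_block_mat (1\<^sub>m N) Y12 (0\<^sub>m k N) G22" and "K \<equiv> four_block_mat Hj U2 (0\<^sub>m k N) D"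
    and "Z \<equiv> hcat Zj Zt" and "h \<equiv> hcat hj U1"
  shows "0\<^sub>m (N + k) (N + k) = mat_adjoint L * L * K + mat_adjoint K * (mat_adjoint L * L)
    - (mat_adjoint Z * B * mat_adjoint B * Z + mat_adjoint h * h)"
  unfolding L_def K_def Z_def h_def four_block_cholesky[OF Y12 G22 Y22 chol]
    lyapunov_res_four_block[OF B Zj Zt hj U1 Hj D Y12 Y22 U2]
  using eqH[symmetric] eqY12 eqY22[symmetric] by simp

lemma projected_equations_change_of_basis:
  fixes A B C Zj hj Hj Zt U1 U2 D Y12 G22 G22inv :: "'a::conjugatable_field mat"
  assumes A: "A \<in> carrier_mat n n" and B: "B \<in> carrier_mat n m" and C: "C \<in> carrier_mat p n"
    and Zj: "Zj \<in> carrier_mat n N" and hj: "hj \<in> carrier_mat p N" and Hj: "Hj \<in> carrier_mat N N"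
    and Zt: "Zt \<in> carrier_mat n k" and U1: "U1 \<in> carrier_mat p k"
    and U2: "U2 \<in> carrier_mat N k" and D: "D \<in> carrier_mat k k"
    and Y12: "Y12 \<in> carrier_mat N k" and G22: "G22 \<in> carrier_mat k k" and G22inv: "G22inv \<in> carrier_mat k k"
    and inv: "G22 * G22inv = 1\<^sub>m k" "G22inv * G22 = 1\<^sub>m k"
  defines "L \<equiv> four_block_mat (1\<^sub>m N) Y12 (0\<^sub>m k N) G22" and "K \<equiv> four_block_mat Hj U2 (0\<^sub>m k N) D"
    and "Z \<equiv> hcat Zj Zt" and "h \<equiv> hcat hj U1"
    and "Zh \<equiv> (- (Zj * Y12) + Zt) * G22inv" and "U1h \<equiv> (- (hj * Y12) + U1) * G22inv"
    and "Hj1 \<equiv> four_block_mat Hj ((- (Hj * Y12) + U2 + Y12 * D) * G22inv) (0\<^sub>m k N) (G22 * D * G22inv)"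
  assumes sylvester: "mat_adjoint A * Z = mat_adjoint C * h + Z * K"
    and lyapunov: "0\<^sub>m (N + k) (N + k) = mat_adjoint L * L * K + mat_adjoint K * (mat_adjoint L * L)
      - (mat_adjoint Z * B * mat_adjoint B * Z + mat_adjoint h * h)"
  shows "mat_adjoint A * hcat Zj Zh = mat_adjoint C * hcat hj U1h + hcat Zj Zh * Hj1"
    and "0\<^sub>m (N + k) (N + k) = Hj1 + mat_adjoint Hj1
      - (mat_adjoint (hcat Zj Zh) * B * mat_adjoint B * hcat Zj Zh + mat_adjoint (hcat hj U1h) * hcat hj U1h)"
proof -
  define M where "M = four_block_mat (1\<^sub>m N) (- (Y12 * G22inv)) (0\<^sub>m k N) G22inv"
  have carriers: "Z \<in> carrier_mat n (N + k)" "h \<in> carrier_mat p (N + k)" "K \<in> carrier_mat (N + k) (N + k)"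
    "L \<in> carrier_mat (N + k) (N + k)" "M \<in> carrier_mat (N + k) (N + k)"
    unfolding Z_def h_def K_def L_def M_def using Zj Zt hj U1 Hj U2 D Y12 G22 G22inv
    by simp_all
  have basis_change: "Z * M = hcat Zj Zh" "h * M = hcat hj U1h" "L * K * M = Hj1"
    unfolding Z_def h_def L_def K_def M_def Zh_def U1h_def Hj1_def
    using hcat_mult_upper_block[OF Zj Zt Y12 G22inv] hcat_mult_upper_block[OF hj U1 Y12 G22inv]
      four_block_upper_similarity[OF Y12 G22 G22inv Hj U2 D] by auto
  have L_mult_M: "L * M = 1\<^sub>m (N + k)" and M_mult_L: "M * L = 1\<^sub>m (N + k)"
    unfolding L_def M_def using four_block_upper_inverse[OF Y12 G22 G22inv inv] by auto
  show "mat_adjoint A * hcat Zj Zh = mat_adjoint C * hcat hj U1h + hcat Zj Zh * Hj1"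
    using sylvester_change_of_basis[OF adjoint_carrier_mat[OF A] adjoint_carrier_mat[OF C] carriers
        sylvester M_mult_L]
    unfolding basis_change .
  show "0\<^sub>m (N + k) (N + k) = Hj1 + mat_adjoint Hj1
      - (mat_adjoint (hcat Zj Zh) * B * mat_adjoint B * hcat Zj Zh + mat_adjoint (hcat hj U1h) * hcat hj U1h)"
    using lyapunov_congruence[OF B carriers lyapunov L_mult_M]
    unfolding basis_change .
qed

theorem mainTheorem10:
  fixes n m p N k :: nat
    and A B C Zj hj Hj Zt U1 U2 D Y12 Y22 G22 G22inv :: "complex mat"
  assumes A: "A \<in> carrier_mat n n" and B: "B \<in> carrier_mat n m" and C: "C \<in> carrier_mat p n"
    and Zj: "Zj \<in> carrier_mat n N" and hj: "hj \<in> carrier_mat p N" and Hj: "Hj \<in> carrier_mat N N"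
    and eqZ: "mat_adjoint A * Zj = mat_adjoint C * hj + Zj * Hj"
    and eqH: "0\<^sub>m N N = Hj + mat_adjoint Hj - (mat_adjoint Zj * B * mat_adjoint B * Zj + mat_adjoint hj * hj)"
    and Zt: "Zt \<in> carrier_mat n k" and U1: "U1 \<in> carrier_mat p k" and D: "D \<in> carrier_mat k k"
    and U2: "U2 = mat_adjoint hj * U1"
    and eqZt: "mat_adjoint A * Zt = mat_adjoint C * U1 + Zj * U2 + Zt * D"
    and Y12: "Y12 \<in> carrier_mat N k"
    and eqY12: "Y12 * D + mat_adjoint Hj * Y12 - mat_adjoint Zj * B * mat_adjoint B * Zt = 0\<^sub>m N k"
    and Y22: "Y22 \<in> carrier_mat k k" and Y22herm: "mat_adjoint Y22 = Y22"
    and eqY22: "0\<^sub>m k k = mat_adjoint Y12 * U2 + Y22 * D + mat_adjoint U2 * Y12 + mat_adjoint D * Y22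
                  - mat_adjoint Zt * B * mat_adjoint B * Zt - mat_adjoint U1 * U1"
    and posdef: "pos_def_mat (Y22 - mat_adjoint Y12 * Y12)"
    and chol: "cholesky_factor G22 (Y22 - mat_adjoint Y12 * Y12)"
    and G22inv: "G22inv \<in> carrier_mat k k" "G22 * G22inv = 1\<^sub>m k" "G22inv * G22 = 1\<^sub>m k"
  shows
    "let Rj = mat_adjoint C + Zj * mat_adjoint hj;
         U1h = (- (hj * Y12) + U1) * G22inv;
         U2h = (- (Hj * Y12) + U2 + Y12 * D) * G22inv;
         Dh = G22 * D * G22inv;
         Zh = (- (Zj * Y12) + Zt) * G22inv;
         Zj1 = hcat Zj Zh;
         hj1 = hcat hj U1h;
         Hj1 = four_block_mat Hj U2h (0\<^sub>m k N) Dh;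
         Rj1 = mat_adjoint C + Zj1 * mat_adjoint hj1
     in mat_adjoint A * Zj1 = mat_adjoint C * hj1 + Zj1 * Hj1
      \<and> 0\<^sub>m (N + k) (N + k) = Hj1 + mat_adjoint Hj1 - (mat_adjoint Zj1 * B * mat_adjoint B * Zj1 + mat_adjoint hj1 * hj1)
      \<and> Rj1 = Rj + Zh * mat_adjoint U1h
      \<and> riccati_res A B C (Zj1 * mat_adjoint Zj1) = Rj1 * mat_adjoint Rj1"
proof -
  have G22: "G22 \<in> carrier_mat k k" and chol_eq: "mat_adjoint G22 * G22 = Y22 - mat_adjoint Y12 * Y12"
    using chol Y12 unfolding cholesky_factor_def by auto
  have U2': "U2 \<in> carrier_mat N k" using U2 hj U1 by simp
  note step = projected_equations_change_of_basis[OF A B C Zj hj Hj Zt U1 U2' D Y12 G22 G22inv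
      sylvester_eq_hcat[OF adjoint_carrier_mat[OF A] adjoint_carrier_mat[OF C] Zj hj Hj Zt U1 U2' D eqZ eqZt]
      cholesky_block_lyapunov_eq[OF B Zj Zt hj U1 Hj D Y12 Y22 G22 U2 eqH eqY12 eqY22 chol_eq]]
  let ?Zh = "(- (Zj * Y12) + Zt) * G22inv" and ?U1h = "(- (hj * Y12) + U1) * G22inv"
    and ?Hj1 = "four_block_mat Hj ((- (Hj * Y12) + U2 + Y12 * D) * G22inv) (0\<^sub>m k N) (G22 * D * G22inv)"
  have Zh: "?Zh \<in> carrier_mat n k" and U1h: "?U1h \<in> carrier_mat p k"
    using Zj Zt hj U1 Y12 G22inv by auto
  have "hcat Zj ?Zh \<in> carrier_mat n (N + k)" "hcat hj ?U1h \<in> carrier_mat p (N + k)"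
    "?Hj1 \<in> carrier_mat (N + k) (N + k)"
    using Zj Zh hj U1h Hj Y12 U2' D G22 G22inv by simp_all
  note riccati = riccati_res_low_rank[OF A B C this step]
  have "mat_adjoint C + hcat Zj ?Zh * mat_adjoint (hcat hj ?U1h)
      = mat_adjoint C + Zj * mat_adjoint hj + ?Zh * mat_adjoint ?U1h"
    using C Zj hj Zh U1h by (simp add: hcat_mult_adjoint_hcat[OF Zj Zh hj U1h] assoc_add_mat')
  with step riccati show ?thesis
    unfolding Let_def by simp
qed

end
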